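(* Let $s_\beta$ be the base phi sum of digits function. Consider the alphabet $\{0,1,2,\dots\}\times\{c_0,c_1,c_2,c_3\}$, writing letters as pairs $(j,c)$, and the morphism $\gamma$ defined for all $j\ge0$ by $\gamma((j,c_0))=(j,c_0)(j,c_1)$, $\gamma((j,c_1))=(j,c_2)(j,c_3)$, $\gamma((j,c_2))=(j+2,c_0)(j+2,c_1)(j+2,c_2)$, $\gamma((j,c_3))=(j+1,c_3)(j+2,c_2)(j+1,c_3)$. Let $x_\gamma=\lim_n\gamma^n((0,c_0))$ be the fixed point of $\gamma$ with initial letter $(0,c_0)$, and let $\delta$ be the morphism from this alphabet to words over the nonnegative integers given by $\delta((j,c_0))=(j,\,j+1)$, $\delta((j,c_1))=(j+2)$, $\delta((j,c_2))=(j+2,\,j+3)$, $\delta((j,c_3))=(j+3,\,j+3)$. Then $\delta(x_\gamma)$ equals the sequence $(s_\beta(N))_{N\ge0}$.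
   Context: Let $\varphi=(1+\sqrt5)/2$. Every natural number $N$ can be written uniquely (ignoring leading and trailing zeros) as a finite sum $N=\sum_{i=R}^{L}d_i\varphi^i$ with $i$ ranging over integers (possibly negative), digits $d_i\in\{0,1\}$, and no two consecutive digits $d_i,d_{i+1}$ both equal to $1$ (base phi expansion). The base phi sum of digits function $s_\beta(N)$ is the number of digits equal to $1$ in this expansion, with $s_\beta(0)=0$. The image of an infinite word under a morphism is the concatenation of the images of its letters. *)

theory Defs
  imports Complex_Main
begin

definition phi :: real where
  "phi = (1 + sqrt 5) / 2"

text \<open>A base phi expansion of N is described by the finite set S of integer
  positions i with digit d_i = 1; no two consecutive positions are both in S.\<close>
definition phi_expansion :: "nat \<Rightarrow> int set \<Rightarrow> bool" where
  "phi_expansion N S \<longleftrightarrow>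
     finite S \<and> (\<forall>i\<in>S. i + 1 \<notin> S) \<and> real N = (\<Sum>i\<in>S. phi powi i)"

definition s_beta :: "nat \<Rightarrow> nat" where
  "s_beta N = card (THE S. phi_expansion N S)"

datatype col = c0 | c1 | c2 | c3

type_synonym letter = "nat \<times> col"

fun gamma :: "letter \<Rightarrow> letter list" where
  "gamma (j, c0) = [(j, c0), (j, c1)]"
| "gamma (j, c1) = [(j, c2), (j, c3)]"
| "gamma (j, c2) = [(j + 2, c0), (j + 2, c1), (j + 2, c2)]"
| "gamma (j, c3) = [(j + 1, c3), (j + 2, c2), (j + 1, c3)]"

fun delta :: "letter \<Rightarrow> nat list" where
  "delta (j, c0) = [j, j + 1]"
| "delta (j, c1) = [j + 2]"
| "delta (j, c2) = [j + 2, j + 3]"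
| "delta (j, c3) = [j + 3, j + 3]"

definition gamma_word :: "letter list \<Rightarrow> letter list" where
  "gamma_word w = concat (map gamma w)"

definition gamma_iter :: "nat \<Rightarrow> letter list" where
  "gamma_iter k = (gamma_word ^^ k) [(0, c0)]"

definition is_gamma_limit :: "(nat \<Rightarrow> letter) \<Rightarrow> bool" where
  "is_gamma_limit x \<longleftrightarrow>
     (\<forall>n. \<exists>K. \<forall>k\<ge>K. n < length (gamma_iter k) \<and> gamma_iter k ! n = x n)"

definition x_gamma :: "nat \<Rightarrow> letter" where
  "x_gamma = (THE x. is_gamma_limit x)"

end

(* The Lucas numbers satisfy L(2k) = phi^(2k) + phi^(-2k) and L(2k+1) = phi^(2k+1) - phi^(-2k-1).
   By strong induction on N, an N in the window [L(2k+2), L(2k+3)] has the expansion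
   {2k+2, -(2k+2)} plus digits in [-2k, 2k], and an N in (L(2k+1), L(2k+2)) has the expansion
   {2k+1, -(2k+2)} plus digits in [1-2k, 2k-1]: each is obtained from the expansion of a smaller
   number by exchanging a few outer digits, using only phi^(i+2) = phi^(i+1) + phi^i.  Counting
   the exchanged digits gives shift relations such as s(N + L(2k+2)) = s(N) + 2 for N <= L(2k+1).
   These are exactly the relations encoded by gamma, where the level j of a letter (j,c) adds j
   to its delta-values: by induction on k, delta maps gamma^k(0,c0), ..., gamma^k(0,c3) to s_beta
   on the consecutive segments [0, L(2k)), [L(2k), L(2k+2)), [L(2k+2), L(2k+3)] and
   (L(2k+3), L(2k+4)).  As gamma^k(0,c0) is a prefix of x_gamma, delta(x_gamma) = s_beta. *)

theory Submission
  imports Defs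
begin

section \<open>Base phi expansions\<close>

definition phi_pow :: "int \<Rightarrow> real" where
  "phi_pow i = phi powi i"

lemma one_less_phi: "1 < phi"
proof -
  have "1 < sqrt 5" by (simp add: real_less_rsqrt)
  then show ?thesis by (simp add: phi_def)
qed

lemma phi_square: "phi\<^sup>2 = phi + 1"
  by (simp add: phi_def power2_eq_square field_simps)

lemma phi_pow_pos: "0 < phi_pow i"
  using one_less_phi by (simp add: phi_pow_def)

lemma phi_pow_rec:
  assumes "j = i + 1" and "l = i + 2"
  shows "phi_pow l = phi_pow j + phi_pow i"
proof -
  have "phi \<noteq> 0" using one_less_phi by simp
  then have "phi_pow l = phi_pow i * phi\<^sup>2" and "phi_pow j = phi_pow i * phi"
    using assms by (simp_all add: phi_pow_def power_int_add)
  then show ?thesis by (simp add: phi_square algebra_simps)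
qed

lemma phi_pow_mono: "i \<le> j \<Longrightarrow> phi_pow i \<le> phi_pow j"
  using one_less_phi by (simp add: phi_pow_def power_int_increasing)

definition no_adjacent :: "int set \<Rightarrow> bool" where
  "no_adjacent S \<longleftrightarrow> (\<forall>i\<in>S. i + 1 \<notin> S)"

lemma no_adjacent_subset: "no_adjacent S \<Longrightarrow> T \<subseteq> S \<Longrightarrow> no_adjacent T"
  unfolding no_adjacent_def by blast

lemma phi_expansion_iff:
  "phi_expansion N S \<longleftrightarrow> finite S \<and> no_adjacent S \<and> real N = sum phi_pow S"
  unfolding phi_expansion_def no_adjacent_def phi_pow_def by simp

lemma sum_phi_pow_less:
  assumes "finite S" "no_adjacent S" "\<forall>i\<in>S. i \<le> m"
  shows "sum phi_pow S < phi_pow (m + 1)"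
  using assms
proof (induction "card S" arbitrary: S m rule: less_induct)
  case less
  show ?case
  proof (cases "S = {}")
    case True
    then show ?thesis using phi_pow_pos by simp
  next
    case False
    define M where "M = Max S"
    have M: "M \<in> S" "M \<le> m" using False less.prems by (auto simp: M_def)
    have below: "\<forall>i\<in>S - {M}. i \<le> M - 2"
    proof
      fix i assume i: "i \<in> S - {M}"
      then have "i < M" using less.prems(1) by (auto simp: M_def less_le)
      moreover have "i + 1 \<noteq> M" using i M(1) less.prems(2) by (auto simp: no_adjacent_def)
      ultimately show "i \<le> M - 2" by linarith
    qed
    have "sum phi_pow (S - {M}) < phi_pow (M - 2 + 1)"
      using less.prems(1,2) below
      by (intro less.hyps) (use False in \<open>auto simp: card_gt_0_iff M(1) intro: no_adjacent_subset\<close>)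
    moreover have "sum phi_pow S = phi_pow M + sum phi_pow (S - {M})"
      using M(1) less.prems(1) by (simp add: sum.remove)
    moreover have "phi_pow (M + 1) = phi_pow M + phi_pow (M - 1)"
      by (rule phi_pow_rec) auto
    moreover have "phi_pow (M + 1) \<le> phi_pow (m + 1)"
      using M(2) by (simp add: phi_pow_mono)
    ultimately show ?thesis by simp
  qed
qed

lemma sum_phi_pow_Max_bounds:
  assumes "finite S" "no_adjacent S" "S \<noteq> {}"
  shows "phi_pow (Max S) \<le> sum phi_pow S" and "sum phi_pow S < phi_pow (Max S + 1)"
proof -
  show "phi_pow (Max S) \<le> sum phi_pow S"
    using assms phi_pow_pos by (intro member_le_sum) (auto intro: less_imp_le)
  show "sum phi_pow S < phi_pow (Max S + 1)"
    using assms by (intro sum_phi_pow_less) auto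
qed

lemma sum_phi_pow_inj:
  assumes "finite S" "no_adjacent S" "finite T" "no_adjacent T"
    and "sum phi_pow S = sum phi_pow T"
  shows "S = T"
  using assms
proof (induction "card S" arbitrary: S T rule: less_induct)
  case less
  note S = less.prems(1,2) and T = less.prems(3,4) and eq = less.prems(5)
  have pos: "0 < sum phi_pow X" if "finite X" "X \<noteq> {}" for X
    using that phi_pow_pos by (intro sum_pos) auto
  show ?case
  proof (cases "S = {} \<or> T = {}")
    case True
    then show ?thesis using pos[of S] pos[of T] S T eq by (metis less_irrefl sum.empty)
  next
    case False
    have Max: "Max S = Max T"
    proof (rule ccontr)
      assume "Max S \<noteq> Max T"
      then have "Max S + 1 \<le> Max T \<or> Max T + 1 \<le> Max S" by linarith
      then show False
        using sum_phi_pow_Max_bounds[OF S] sum_phi_pow_Max_bounds[OF T] False eq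
          phi_pow_mono[of "Max S + 1" "Max T"] phi_pow_mono[of "Max T + 1" "Max S"] by auto
    qed
    have "card (S - {Max S}) < card S" using S False by (simp add: card_gt_0_iff)
    moreover have "sum phi_pow S = phi_pow (Max S) + sum phi_pow (S - {Max S})"
      "sum phi_pow T = phi_pow (Max T) + sum phi_pow (T - {Max T})"
      using S T False by (simp_all add: sum.remove)
    ultimately have "S - {Max S} = T - {Max T}"
      using S T eq Max by (intro less.hyps) (auto intro: no_adjacent_subset)
    then show ?thesis
      using S T False Max_in insert_Diff[of "Max S" S] insert_Diff[of "Max T" T] Max by metis
  qed
qed

lemma phi_expansion_unique: "phi_expansion N S \<Longrightarrow> phi_expansion N T \<Longrightarrow> S = T"
  unfolding phi_expansion_iff using sum_phi_pow_inj by metis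

lemma s_beta_eq: "phi_expansion N S \<Longrightarrow> s_beta N = card S"
  unfolding s_beta_def by (metis phi_expansion_unique the_equality)

lemma phi_expansion_exchange:
  assumes N: "phi_expansion N (A \<union> R)" and "finite B"
    and disj: "A \<inter> R = {}" "B \<inter> R = {}" and "no_adjacent (B \<union> R)"
    and val: "sum phi_pow B = sum phi_pow A + real d"
  shows "phi_expansion (N + d) (B \<union> R)"
    and "s_beta (N + d) + card A = s_beta N + card B"
proof -
  have fin: "finite A" "finite R" using N by (auto simp: phi_expansion_iff)
  then show exp: "phi_expansion (N + d) (B \<union> R)"
    using assms by (auto simp: phi_expansion_iff sum.union_disjoint)
  show "s_beta (N + d) + card A = s_beta N + card B"
    using s_beta_eq[OF exp] s_beta_eq[OF N] fin \<open>finite B\<close> disj by (simp add: card_Un_disjoint)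
qed

section \<open>Lucas numbers\<close>

fun lucas :: "nat \<Rightarrow> nat" where
  "lucas 0 = 2"
| "lucas (Suc 0) = 1"
| "lucas (Suc (Suc n)) = lucas (Suc n) + lucas n"

lemma power_golden_rec:
  fixes x :: "'a::comm_ring_1"
  assumes "x\<^sup>2 = x + 1"
  shows "x ^ (n + 2) = x ^ (n + 1) + x ^ n"
proof -
  have "x ^ (n + 2) = x ^ n * x\<^sup>2" by (rule power_add)
  also have "\<dots> = x ^ n * x + x ^ n" using assms by (simp add: algebra_simps)
  finally show ?thesis by (simp add: algebra_simps)
qed

lemma lucas_closed_form: "real (lucas n) = phi ^ n + (- 1 / phi) ^ n"
proof (induction n rule: lucas.induct)
  case 2
  have "phi * phi = phi + 1" using phi_square by (simp add: power2_eq_square)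
  then show ?case using one_less_phi by (simp add: field_simps)
next
  case (3 n)
  have "(- 1 / phi)\<^sup>2 = - 1 / phi + 1"
    using phi_square one_less_phi by (simp add: field_simps power2_eq_square)
  then show ?case
    using 3 phi_square power_golden_rec[of phi n] power_golden_rec[of "- 1 / phi" n] by simp
qed simp

lemma lucas_even: "even n \<Longrightarrow> real (lucas n) = phi_pow (int n) + phi_pow (- int n)"
  by (simp add: lucas_closed_form phi_pow_def power_int_minus power_divide inverse_eq_divide)

lemma lucas_odd: "odd n \<Longrightarrow> real (lucas n) = phi_pow (int n) - phi_pow (- int n)"
  by (simp add: lucas_closed_form phi_pow_def power_int_minus power_divide inverse_eq_divide)

lemma lucas_rec:
  assumes "j = n + 1" and "l = n + 2"
  shows "lucas l = lucas j + lucas n"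
  using assms by (simp add: numeral_2_eq_2)

declare lucas.simps(3) [simp del]

lemma lucas_pos: "0 < lucas n"
  by (induction n rule: lucas.induct) (simp_all add: lucas.simps)

lemma lucas_strict_mono: "1 \<le> m \<Longrightarrow> m < n \<Longrightarrow> lucas m < lucas n"
proof (induction n)
  case (Suc n)
  then obtain k where "n = Suc k" by (cases n) auto
  then have "lucas n < lucas (Suc n)" using lucas_pos[of k] by (simp add: lucas.simps)
  then show ?case using Suc by (cases "m = n") auto
qed simp

lemma lucas_le_iff: "1 \<le> m \<Longrightarrow> 1 \<le> n \<Longrightarrow> lucas m \<le> lucas n \<longleftrightarrow> m \<le> n"
  using lucas_strict_mono by (metis le_less not_le)

lemma lucas_ge: "n \<le> lucas n"
proof (induction n rule: lucas.induct)
  case (3 n)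
  then show ?case using lucas_pos[of n] by (simp add: lucas.simps)
qed simp_all

lemma lucas_windows_cover:
  assumes "2 \<le> N"
  obtains k where "lucas (2*k+2) \<le> N" "N \<le> lucas (2*k+3)"
    | k where "lucas (2*k+1) < N" "N < lucas (2*k+2)"
proof -
  define n where "n = (LEAST n. 1 \<le> n \<and> N \<le> lucas n)"
  have "1 \<le> N \<and> N \<le> lucas N" using lucas_ge[of N] assms by simp
  then have n: "1 \<le> n" "N \<le> lucas n" unfolding n_def by (metis (mono_tags) LeastI)+
  have "n \<noteq> 1" using n assms by (auto simp: lucas.simps One_nat_def)
  then obtain m where m: "n = Suc m" "1 \<le> m" using n by (cases n) auto
  have "\<not> N \<le> lucas m" using m by (metis n_def not_less_Least lessI)
  then have below: "lucas m < N" by simp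
  show ?thesis
  proof (cases "even m")
    case True
    then obtain j where "m = 2*j" by (rule evenE)
    then have e: "2*(j-1)+2 = m" "2*(j-1)+3 = n" using m by auto
    show ?thesis using that(1)[of "j-1", unfolded e] below n by simp
  next
    case False
    then obtain k where k: "m = 2*k + 1" using oddE by blast
    show ?thesis
    proof (cases "N = lucas (2*k+2)")
      case True
      have "lucas (2*k+2) < lucas (2*k+3)" by (rule lucas_strict_mono) auto
      then show ?thesis using True by (intro that(1)) auto
    next
      case False
      have e: "2*k+1 = m" "2*k+2 = n" using k m by simp_all
      show ?thesis using that(2)[of k, unfolded e] below n False[unfolded e] by simp
    qed
  qed
qed

section \<open>Expansions on the Lucas windows\<close>

definition even_block :: "nat \<Rightarrow> nat \<Rightarrow> bool" where
  "even_block k N \<longleftrightarrow>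
     (\<exists>R. R \<subseteq> {-(2*int k)..2*int k} \<and> phi_expansion N ({2*int k+2, -(2*int k+2)} \<union> R))"

definition odd_block :: "nat \<Rightarrow> nat \<Rightarrow> bool" where
  "odd_block k N \<longleftrightarrow>
     (\<exists>R. R \<subseteq> {1-2*int k..2*int k-1} \<and> phi_expansion N ({2*int k+1, -(2*int k+2)} \<union> R))"

lemma even_block_add_lucas:
  assumes m: "phi_expansion m R" and R: "R \<subseteq> {-(2*int k)..2*int k}"
  shows "even_block k (m + lucas (2*k+2))" and "s_beta (m + lucas (2*k+2)) = s_beta m + 2"
proof -
  let ?B = "{2*int k+2, -(2*int k+2)}"
  have val: "sum phi_pow ?B = sum phi_pow {} + real (lucas (2*k+2))"
    using lucas_even[of "2*k+2"] by (simp add: algebra_simps)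
  have "no_adjacent (?B \<union> R)"
    using m R by (auto simp: phi_expansion_iff no_adjacent_def)
  moreover have "phi_expansion m ({} \<union> R)" "?B \<inter> R = {}" using m R by auto
  ultimately have "phi_expansion (m + lucas (2*k+2)) (?B \<union> R)"
    and "s_beta (m + lucas (2*k+2)) + card {} = s_beta m + card ?B"
    using phi_expansion_exchange[OF _ _ _ _ _ val] by auto
  then show "even_block k (m + lucas (2*k+2))" and "s_beta (m + lucas (2*k+2)) = s_beta m + 2"
    using R by (auto simp: even_block_def)
qed

lemma odd_block_add_lucas_even:
  assumes "odd_block k N"
  shows "odd_block (Suc k) (N + lucas (2*k+2))" and "s_beta (N + lucas (2*k+2)) = s_beta N + 1"
proof -
  obtain R where R: "R \<subseteq> {1-2*int k..2*int k-1}"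
    and N: "phi_expansion N ({2*int k+1, -(2*int k+2)} \<union> R)"
    using assms by (auto simp: odd_block_def)
  let ?A = "{2*int k+1, -(2*int k+2)}" and ?B = "{2*int k+3, -(2*int k+4), -(2*int k+1)}"
  have "phi_pow (2*int k+3) = phi_pow (2*int k+2) + phi_pow (2*int k+1)"
    "phi_pow (-(2*int k+1)) = phi_pow (-(2*int k+2)) + phi_pow (-(2*int k+3))"
    "phi_pow (-(2*int k+2)) = phi_pow (-(2*int k+3)) + phi_pow (-(2*int k+4))"
    by (rule phi_pow_rec; simp)+
  then have val: "sum phi_pow ?B = sum phi_pow ?A + real (lucas (2*k+2))"
    using lucas_even[of "2*k+2"] by (simp add: algebra_simps)
  have "no_adjacent (?B \<union> R)"
    using N R by (auto simp: phi_expansion_iff no_adjacent_def)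
  moreover have "?A \<inter> R = {}" "?B \<inter> R = {}" using R by auto
  ultimately have exp: "phi_expansion (N + lucas (2*k+2)) (?B \<union> R)"
    and "s_beta (N + lucas (2*k+2)) + card ?A = s_beta N + card ?B"
    using phi_expansion_exchange[OF N _ _ _ _ val] by auto
  then show "s_beta (N + lucas (2*k+2)) = s_beta N + 1" by simp
  have "?B \<union> R = {2*int (Suc k)+1, -(2*int (Suc k)+2)} \<union> insert (-(2*int k+1)) R"
    by auto
  moreover have "insert (-(2*int k+1)) R \<subseteq> {1-2*int (Suc k)..2*int (Suc k)-1}"
    using R by auto
  ultimately show "odd_block (Suc k) (N + lucas (2*k+2))"
    using exp unfolding odd_block_def by metis
qed

lemma odd_block_add_lucas_odd:
  assumes "odd_block k N"
  shows "odd_block (Suc k) (N + lucas (2*k+3))" and "s_beta (N + lucas (2*k+3)) = s_beta N + 1"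
proof -
  obtain R where R: "R \<subseteq> {1-2*int k..2*int k-1}"
    and "phi_expansion N ({2*int k+1, -(2*int k+2)} \<union> R)"
    using assms by (auto simp: odd_block_def)
  then have N: "phi_expansion N ({-(2*int k+2)} \<union> insert (2*int k+1) R)"
    by (simp add: insert_commute)
  let ?A = "{-(2*int k+2)}" and ?B = "{2*int k+3, -(2*int k+4)}"
  have "phi_pow (-(2*int k+2)) = phi_pow (-(2*int k+3)) + phi_pow (-(2*int k+4))"
    by (rule phi_pow_rec) simp_all
  then have val: "sum phi_pow ?B = sum phi_pow ?A + real (lucas (2*k+3))"
    using lucas_odd[of "2*k+3"] by (simp add: algebra_simps)
  have "no_adjacent (?B \<union> insert (2*int k+1) R)"
    using N R by (auto simp: phi_expansion_iff no_adjacent_def)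
  moreover have "?A \<inter> insert (2*int k+1) R = {}" "?B \<inter> insert (2*int k+1) R = {}"
    using R by auto
  ultimately have exp: "phi_expansion (N + lucas (2*k+3)) (?B \<union> insert (2*int k+1) R)"
    and "s_beta (N + lucas (2*k+3)) + card ?A = s_beta N + card ?B"
    using phi_expansion_exchange[OF N _ _ _ _ val] by auto
  then show "s_beta (N + lucas (2*k+3)) = s_beta N + 1" by simp
  have "?B \<union> insert (2*int k+1) R = {2*int (Suc k)+1, -(2*int (Suc k)+2)} \<union> insert (2*int k+1) R"
    by auto
  moreover have "insert (2*int k+1) R \<subseteq> {1-2*int (Suc k)..2*int (Suc k)-1}"
    using R by auto
  ultimately show "odd_block (Suc k) (N + lucas (2*k+3))"
    using exp unfolding odd_block_def by metis
qed

lemma even_block_add_lucas_odd: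
  assumes "even_block k N"
  shows "odd_block (k+2) (N + lucas (2*k+5))" and "s_beta (N + lucas (2*k+5)) = s_beta N + 2"
proof -
  obtain R where R: "R \<subseteq> {-(2*int k)..2*int k}"
    and "phi_expansion N ({2*int k+2, -(2*int k+2)} \<union> R)"
    using assms by (auto simp: even_block_def)
  then have N: "phi_expansion N ({-(2*int k+2)} \<union> insert (2*int k+2) R)"
    by (simp add: insert_commute)
  let ?A = "{-(2*int k+2)}" and ?B = "{2*int k+5, -(2*int k+6), -(2*int k+3)}"
  have "phi_pow (-(2*int k+2)) = phi_pow (-(2*int k+3)) + phi_pow (-(2*int k+4))"
    "phi_pow (-(2*int k+4)) = phi_pow (-(2*int k+5)) + phi_pow (-(2*int k+6))"
    by (rule phi_pow_rec; simp)+
  then have val: "sum phi_pow ?B = sum phi_pow ?A + real (lucas (2*k+5))"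
    using lucas_odd[of "2*k+5"] by (simp add: algebra_simps)
  have "no_adjacent (?B \<union> insert (2*int k+2) R)"
    using N R by (auto simp: phi_expansion_iff no_adjacent_def)
  moreover have "?A \<inter> insert (2*int k+2) R = {}" "?B \<inter> insert (2*int k+2) R = {}"
    using R by auto
  ultimately have exp: "phi_expansion (N + lucas (2*k+5)) (?B \<union> insert (2*int k+2) R)"
    and "s_beta (N + lucas (2*k+5)) + card ?A = s_beta N + card ?B"
    using phi_expansion_exchange[OF N _ _ _ _ val] by auto
  then show "s_beta (N + lucas (2*k+5)) = s_beta N + 2" by simp
  have "?B \<union> insert (2*int k+2) R
      = {2*int (k+2)+1, -(2*int (k+2)+2)} \<union> ({-(2*int k+3), 2*int k+2} \<union> R)"
    by auto
  moreover have "{-(2*int k+3), 2*int k+2} \<union> R \<subseteq> {1-2*int (k+2)..2*int (k+2)-1}"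
    using R by auto
  ultimately show "odd_block (k+2) (N + lucas (2*k+5))"
    using exp unfolding odd_block_def by metis
qed

definition window_blocks :: "nat \<Rightarrow> bool" where
  "window_blocks N \<longleftrightarrow>
     (\<forall>k. lucas (2*k+2) \<le> N \<longrightarrow> N \<le> lucas (2*k+3) \<longrightarrow> even_block k N) \<and>
     (\<forall>k. lucas (2*k+1) < N \<longrightarrow> N < lucas (2*k+2) \<longrightarrow> odd_block k N)"

lemma window_blocks_even_block:
  "window_blocks N \<Longrightarrow> lucas (2*k+2) \<le> N \<Longrightarrow> N \<le> lucas (2*k+3) \<Longrightarrow> even_block k N"
  unfolding window_blocks_def by blast

lemma window_blocks_odd_block:
  "window_blocks N \<Longrightarrow> lucas (2*k+1) < N \<Longrightarrow> N < lucas (2*k+2) \<Longrightarrow> odd_block k N"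
  unfolding window_blocks_def by blast

lemma bounded_expansion_if_window_blocks:
  assumes "window_blocks N" and "N \<le> lucas (2*k+1)"
  shows "\<exists>S. S \<subseteq> {-(2*int k)..2*int k} \<and> phi_expansion N S"
proof (cases "N \<le> 1")
  case True
  then consider "N = 0" | "N = 1" by linarith
  then show ?thesis
  proof cases
    case 1
    then show ?thesis by (intro exI[of _ "{}"]) (simp add: phi_expansion_iff no_adjacent_def)
  next
    case 2
    then show ?thesis
      by (intro exI[of _ "{0}"]) (simp add: phi_expansion_iff no_adjacent_def phi_pow_def)
  qed
next
  case False
  then have "2 \<le> N" by simp
  then show ?thesis
  proof (cases rule: lucas_windows_cover)
    case (1 i)
    then obtain R where R: "R \<subseteq> {-(2*int i)..2*int i}"
      and "phi_expansion N ({2*int i+2, -(2*int i+2)} \<union> R)"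
      using window_blocks_even_block[OF assms(1)] by (auto simp: even_block_def)
    moreover have "2*i+2 \<le> 2*k+1"
      using 1 assms(2) lucas_le_iff[of "2*i+2" "2*k+1"] by simp
    then have "int i + 1 \<le> int k" by linarith
    ultimately show ?thesis by (intro exI conjI) auto
  next
    case (2 i)
    then obtain R where R: "R \<subseteq> {1-2*int i..2*int i-1}"
      and "phi_expansion N ({2*int i+1, -(2*int i+2)} \<union> R)"
      using window_blocks_odd_block[OF assms(1)] by (auto simp: odd_block_def)
    moreover have "2*i+1 < 2*k+1"
      using 2 assms(2) lucas_le_iff[of "2*k+1" "2*i+1"] by linarith
    then have "int i + 1 \<le> int k" by linarith
    ultimately show ?thesis by (intro exI conjI) auto
  qed
qed

lemma phi_expansion_two: "phi_expansion 2 {1, -2}"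
proof -
  have "phi_pow 1 = phi_pow 0 + phi_pow (-1)" "phi_pow 0 = phi_pow (-1) + phi_pow (-2)"
    by (rule phi_pow_rec; simp)+
  then show ?thesis by (simp add: phi_expansion_iff no_adjacent_def phi_pow_def)
qed

lemma even_block_if_smaller_window_blocks:
  assumes IH: "\<And>m. m < N \<Longrightarrow> window_blocks m"
    and N: "lucas (2*k+2) \<le> N" "N \<le> lucas (2*k+3)"
  shows "even_block k N"
proof -
  define m where "m = N - lucas (2*k+2)"
  have "lucas (2*k+3) = lucas (2*k+2) + lucas (2*k+1)" by (rule lucas_rec) simp_all
  then have "m \<le> lucas (2*k+1)" "m < N"
    using N lucas_pos[of "2*k+2"] by (auto simp: m_def)
  then obtain S where "S \<subseteq> {-(2*int k)..2*int k}" "phi_expansion m S"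
    using IH bounded_expansion_if_window_blocks by blast
  from even_block_add_lucas(1)[OF this(2,1)] show ?thesis
    using N by (simp add: m_def)
qed

lemma odd_block_if_smaller_window_blocks:
  assumes IH: "\<And>m. m < N \<Longrightarrow> window_blocks m"
    and N: "lucas (2*k+1) < N" "N < lucas (2*k+2)"
  shows "odd_block k N"
proof (cases k)
  case 0
  then have "N = 2" using N by (simp add: lucas.simps)
  then show ?thesis using 0 phi_expansion_two by (auto simp: odd_block_def)
next
  case (Suc k')
  define m where "m = N - lucas (2*k'+3)"
  have N': "lucas (2*k'+3) < N" "N < lucas (2*k'+4)"
    using N Suc by (simp_all add: eval_nat_numeral)
  have rec: "lucas (2*k'+4) = lucas (2*k'+3) + lucas (2*k'+2)"
    "lucas (2*k'+3) = lucas (2*k'+2) + lucas (2*k'+1)"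
    "lucas (2*k'+2) = lucas (2*k'+1) + lucas (2*k')"
    by (rule lucas_rec; simp)+
  have Nm: "N = m + lucas (2*k'+3)" and m: "1 \<le> m" "m < lucas (2*k'+2)"
    using N' rec(1) by (auto simp: m_def)
  have m_less: "m < N" using Nm lucas_pos[of "2*k'+3"] by simp
  consider "m < lucas (2*k')" | "lucas (2*k') \<le> m" "m \<le> lucas (2*k'+1)"
    | "lucas (2*k'+1) < m" by linarith
  then show ?thesis
  proof cases
    case 1
    define N' where "N' = m + lucas (2*k'+1)"
    have "N' < N" "lucas (2*k'+1) < N'" "N' < lucas (2*k'+2)"
      using 1 m Nm rec(2,3) lucas_pos[of "2*k'+2"] by (auto simp: N'_def)
    then have "odd_block k' N'" using IH window_blocks_odd_block by blast
    moreover have "N = N' + lucas (2*k'+2)" using Nm rec(2) by (simp add: N'_def)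
    ultimately show ?thesis unfolding Suc by (metis odd_block_add_lucas_even(1))
  next
    case 2
    then obtain j where j: "k' = Suc j" by (cases k') (auto simp: lucas.simps)
    have "lucas (2*j+2) \<le> m" "m \<le> lucas (2*j+3)" "N = m + lucas (2*j+5)" "k = j+2"
      using 2 Nm Suc j by (simp_all add: eval_nat_numeral)
    then show ?thesis
      using IH[OF m_less] window_blocks_even_block even_block_add_lucas_odd(1) by metis
  next
    case 3
    then have "odd_block k' m"
      using IH[OF m_less] window_blocks_odd_block m by blast
    then show ?thesis unfolding Suc Nm by (rule odd_block_add_lucas_odd(1))
  qed
qed

lemma window_blocks: "window_blocks N"
proof (induction N rule: less_induct)
  case (less N)
  then show ?case
    using even_block_if_smaller_window_blocks odd_block_if_smaller_window_blocks
    unfolding window_blocks_def by blast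
qed

lemma s_beta_add_lucas_even:
  assumes "N \<le> lucas (2*k+1)"
  shows "s_beta (N + lucas (2*k+2)) = s_beta N + 2"
proof -
  obtain S where "S \<subseteq> {-(2*int k)..2*int k}" "phi_expansion N S"
    using bounded_expansion_if_window_blocks[OF window_blocks assms] by blast
  from even_block_add_lucas(2)[OF this(2,1)] show ?thesis .
qed

lemma s_beta_odd_window_add_lucas_even:
  "lucas (2*k+1) < N \<Longrightarrow> N < lucas (2*k+2) \<Longrightarrow> s_beta (N + lucas (2*k+2)) = s_beta N + 1"
  using window_blocks_odd_block[OF window_blocks] odd_block_add_lucas_even(2) by blast

lemma s_beta_odd_window_add_lucas_odd:
  "lucas (2*k+1) < N \<Longrightarrow> N < lucas (2*k+2) \<Longrightarrow> s_beta (N + lucas (2*k+3)) = s_beta N + 1"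
  using window_blocks_odd_block[OF window_blocks] odd_block_add_lucas_odd(2) by blast

lemma s_beta_even_window_add_lucas_odd:
  "lucas (2*k+2) \<le> N \<Longrightarrow> N \<le> lucas (2*k+3) \<Longrightarrow> s_beta (N + lucas (2*k+5)) = s_beta N + 2"
  using window_blocks_even_block[OF window_blocks] even_block_add_lucas_odd(2) by blast

lemma s_beta_small:
  "s_beta 0 = 0" "s_beta 1 = 1" "s_beta 2 = 2" "s_beta 3 = 2" "s_beta 4 = 3" "s_beta 5 = 3"
  "s_beta 6 = 3"
proof -
  show s0: "s_beta 0 = 0"
    using s_beta_eq[of 0 "{}"] by (simp add: phi_expansion_iff no_adjacent_def)
  show s1: "s_beta 1 = 1" 
    using s_beta_eq[of 1 "{0}"] by (simp add: phi_expansion_iff no_adjacent_def phi_pow_def)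
  show s2: "s_beta 2 = 2" using s_beta_eq[OF phi_expansion_two] by simp
  show "s_beta 3 = 2" "s_beta 4 = 3"
    using s_beta_add_lucas_even[of 0 0] s_beta_add_lucas_even[of 1 0] s0 s1
    by (simp_all add: lucas.simps eval_nat_numeral)
  show "s_beta 5 = 3" "s_beta 6 = 3"
    using s_beta_odd_window_add_lucas_even[of 0 2] s_beta_odd_window_add_lucas_odd[of 0 2] s2
    by (simp_all add: lucas.simps eval_nat_numeral)
qed

section \<open>The words gamma^k(0,c) under delta\<close>

lemma map_upt_append: "a \<le> b \<Longrightarrow> b \<le> c \<Longrightarrow> map g [a..<b] @ map g [b..<c] = map g [a..<c]"
  by (metis le_Suc_ex map_append upt_add_eq_append)

lemma map_upt_shift:
  assumes "a' = a + t" and "b' = b + t" and "\<And>i. a \<le> i \<Longrightarrow> i < b \<Longrightarrow> g (i + t) = g i + d"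
  shows "map g [a'..<b'] = map (\<lambda>x. x + d) (map g [a..<b])"
proof (rule map_upt_eqI)
  fix i
  assume "i < length (map (\<lambda>x. x + d) (map g [a..<b]))"
  then have "i < b - a" by simp
  then have "g (a + i + t) = g (a + i) + d" using assms(3) by simp
  then show "map (\<lambda>x. x + d) (map g [a..<b]) ! i = g (a' + i)"
    using \<open>i < b - a\<close> assms(1) by (simp add: add_ac)
qed (use assms in simp)

lemma map_upt_eq_append_prefix:
  assumes "map g [0..<L] = u @ v"
  shows "u = map g [0..<length u]"
proof -
  have "length u \<le> L" using arg_cong[OF assms, of length] by simp
  have "u = take (length u) (map g [0..<L])" using assms by simp
  also have "\<dots> = map g [0..<length u]" using \<open>length u \<le> L\<close> by (simp add: take_map)
  finally show ?thesis .
qed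

definition gamma_pow :: "nat \<Rightarrow> letter \<Rightarrow> letter list" where
  "gamma_pow k a = (gamma_word ^^ k) [a]"

definition delta_word :: "letter list \<Rightarrow> nat list" where
  "delta_word w = concat (map delta w)"

fun shift_letter :: "nat \<Rightarrow> letter \<Rightarrow> letter" where
  "shift_letter t (j, c) = (j + t, c)"

lemma funpow_gamma_word_append:
  "(gamma_word ^^ k) (u @ v) = (gamma_word ^^ k) u @ (gamma_word ^^ k) v"
  by (induction k arbitrary: u v) (simp_all add: gamma_word_def)

lemma funpow_gamma_word_eq: "(gamma_word ^^ k) w = concat (map (gamma_pow k) w)"
proof (induction w)
  case Nil
  then show ?case by (induction k) (simp_all add: gamma_word_def)
next
  case (Cons a w)
  then show ?case
    using funpow_gamma_word_append[of k "[a]" w] by (simp add: gamma_pow_def)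
qed

lemma gamma_pow_Suc: "gamma_pow (Suc k) a = concat (map (gamma_pow k) (gamma a))"
  by (simp add: gamma_pow_def funpow_Suc_right funpow_gamma_word_eq gamma_word_def
      del: funpow.simps)

lemma gamma_shift_letter: "gamma (shift_letter t a) = map (shift_letter t) (gamma a)"
  by (cases a rule: gamma.cases) auto

lemma gamma_pow_shift_letter:
  "gamma_pow k (shift_letter t a) = map (shift_letter t) (gamma_pow k a)"
  by (induction k arbitrary: a)
    (simp_all add: gamma_pow_def[of 0] gamma_pow_Suc gamma_shift_letter map_concat o_def)

lemma delta_word_append: "delta_word (u @ v) = delta_word u @ delta_word v"
  by (simp add: delta_word_def)

lemma delta_word_shift_letter:
  "delta_word (map (shift_letter t) w) = map (\<lambda>x. x + t) (delta_word w)"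
proof -
  have "delta (shift_letter t a) = map (\<lambda>x. x + t) (delta a)" for a
    by (cases a rule: delta.cases) auto
  then show ?thesis by (induction w) (simp_all add: delta_word_def)
qed

lemma delta_word_gamma_pow_level:
  "delta_word (gamma_pow k (j, c)) = map (\<lambda>x. x + j) (delta_word (gamma_pow k (0, c)))"
  using gamma_pow_shift_letter[of k j "(0, c)"] delta_word_shift_letter by simp

lemma delta_word_gamma_pow_Suc:
  "delta_word (gamma_pow (Suc k) (0, c0))
     = delta_word (gamma_pow k (0, c0)) @ delta_word (gamma_pow k (0, c1))"
  "delta_word (gamma_pow (Suc k) (0, c1))
     = delta_word (gamma_pow k (0, c2)) @ delta_word (gamma_pow k (0, c3))"
  "delta_word (gamma_pow (Suc k) (0, c2)) = map (\<lambda>x. x + 2)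
     (delta_word (gamma_pow k (0, c0)) @ delta_word (gamma_pow k (0, c1))
      @ delta_word (gamma_pow k (0, c2)))"
  "delta_word (gamma_pow (Suc k) (0, c3))
     = map (\<lambda>x. x + 1) (delta_word (gamma_pow k (0, c3)))
       @ map (\<lambda>x. x + 2) (delta_word (gamma_pow k (0, c2)))
       @ map (\<lambda>x. x + 1) (delta_word (gamma_pow k (0, c3)))"
  by (simp_all add: gamma_pow_Suc delta_word_append delta_word_gamma_pow_level[of k "Suc 0"]
      delta_word_gamma_pow_level[of k "Suc (Suc 0)"])

definition lucas_segments :: "nat \<Rightarrow> bool" where
  "lucas_segments k \<longleftrightarrow>
     delta_word (gamma_pow k (0, c0)) = map s_beta [0..<lucas (2*k)] \<and>
     delta_word (gamma_pow k (0, c1)) = map s_beta [lucas (2*k)..<lucas (2*k+2)] \<and>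
     delta_word (gamma_pow k (0, c2)) = map s_beta [lucas (2*k+2)..<lucas (2*k+3)+1] \<and>
     delta_word (gamma_pow k (0, c3)) = map s_beta [lucas (2*k+3)+1..<lucas (2*k+4)]"

lemma lucas_segments_0: "lucas_segments 0"
proof -
  have "lucas (2*0) = 2" "lucas (2*0+2) = 3" "lucas (2*0+3) = 4" "lucas (2*0+4) = 7"
    by (simp_all add: lucas.simps eval_nat_numeral)
  then show ?thesis
    unfolding lucas_segments_def
    by (simp add: gamma_pow_def delta_word_def upt_rec s_beta_small s_beta_small(2)[unfolded One_nat_def])
qed

(* The simplifier rewrites n + 2 to Suc (Suc n) but leaves n + 3 alone; Lucas indices are
   therefore aligned by unfolding these equations or hidden behind local definitions. *)
lemma lucas_index_Suc:
  "2 * Suc k + 1 = 2*k+3" "2 * Suc k + 2 = 2*k+4" "2 * Suc k + 3 = 2*k+5"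
  "2 * Suc k + 4 = 2*k+6"
  by simp_all

lemma lucas_segments_Suc_c2:
  assumes "delta_word (gamma_pow k (0, c0)) @ delta_word (gamma_pow k (0, c1))
      @ delta_word (gamma_pow k (0, c2)) = map s_beta [0..<lucas (2*k+3)+1]"
  shows "delta_word (gamma_pow (Suc k) (0, c2)) = map s_beta [lucas (2*k+4)..<lucas (2*k+5)+1]"
proof -
  have "lucas (2*k+5) = lucas (2*k+4) + lucas (2*k+3)" by (rule lucas_rec) simp_all
  then have "map s_beta [lucas (2*k+4)..<lucas (2*k+5)+1]
      = map (\<lambda>x. x + 2) (map s_beta [0..<lucas (2*k+3) + 1])"
    using s_beta_add_lucas_even[of _ "Suc k", unfolded lucas_index_Suc]
    by (intro map_upt_shift[where t = "lucas (2*k+4)"]) simp_all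
  then show ?thesis using assms by (simp add: delta_word_gamma_pow_Suc)
qed

lemma lucas_segments_Suc_c3:
  assumes c2: "delta_word (gamma_pow k (0, c2)) = map s_beta [lucas (2*k+2)..<lucas (2*k+3)+1]"
    and c3: "delta_word (gamma_pow k (0, c3)) = map s_beta [lucas (2*k+3)+1..<lucas (2*k+4)]"
  shows "delta_word (gamma_pow (Suc k) (0, c3)) = map s_beta [lucas (2*k+5)+1..<lucas (2*k+6)]"
proof -
  define l1 l2 l3 l4 l5 l6 where "l1 = lucas (2*k+1)" "l2 = lucas (2*k+2)" "l3 = lucas (2*k+3)"
    "l4 = lucas (2*k+4)" "l5 = lucas (2*k+5)" "l6 = lucas (2*k+6)"
  have rec: "l3 = l2 + l1" "l4 = l3 + l2" "l5 = l4 + l3" "l6 = l5 + l4"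
    unfolding l1_l2_l3_l4_l5_l6_def by (rule lucas_rec; simp)+
  have "0 < l2" using lucas_pos by (simp add: l1_l2_l3_l4_l5_l6_def)
  note windows = s_beta_odd_window_add_lucas_even[of "Suc k", unfolded lucas_index_Suc]
    s_beta_even_window_add_lucas_odd[of k]
    s_beta_odd_window_add_lucas_odd[of "Suc k", unfolded lucas_index_Suc]
  have "map s_beta [l5+1..<l5+l2] = map (\<lambda>x. x + 1) (map s_beta [l3+1..<l4])"
    using windows(1) rec by (intro map_upt_shift[where t = l4]) (simp_all add: l1_l2_l3_l4_l5_l6_def)
  moreover have "map s_beta [l5+l2..<l5+l3+1] = map (\<lambda>x. x + 2) (map s_beta [l2..<l3+1])"
    using windows(2) by (intro map_upt_shift[where t = l5]) (simp_all add: l1_l2_l3_l4_l5_l6_def)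
  moreover have "map s_beta [l5+l3+1..<l6] = map (\<lambda>x. x + 1) (map s_beta [l3+1..<l4])"
    using windows(3) rec by (intro map_upt_shift[where t = l5]) (simp_all add: l1_l2_l3_l4_l5_l6_def)
  moreover have "map s_beta [l5+1..<l6]
      = map s_beta [l5+1..<l5+l2] @ map s_beta [l5+l2..<l5+l3+1] @ map s_beta [l5+l3+1..<l6]"
  proof -
    have "l5+1 \<le> l5+l2" "l5+l2 \<le> l5+l3+1" "l5+l3+1 \<le> l6" "l5+l2 \<le> l6"
      using rec \<open>0 < l2\<close> by linarith+
    then show ?thesis by (simp only: map_upt_append)
  qed
  ultimately show ?thesis
    using c2 c3 by (simp add: delta_word_gamma_pow_Suc l1_l2_l3_l4_l5_l6_def)
qed

lemma lucas_segments_Suc: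
  assumes "lucas_segments k"
  shows "lucas_segments (Suc k)"
proof -
  define l0 l1 l2 l3 l4 where "l0 = lucas (2*k)" "l1 = lucas (2*k+1)" "l2 = lucas (2*k+2)"
    "l3 = lucas (2*k+3)" "l4 = lucas (2*k+4)"
  have rec: "l2 = l1 + l0" "l3 = l2 + l1" "l4 = l3 + l2"
    unfolding l0_l1_l2_l3_l4_def by (rule lucas_rec; simp)+
  have "0 < l2" using lucas_pos by (simp add: l0_l1_l2_l3_l4_def)
  have D: "delta_word (gamma_pow k (0, c0)) = map s_beta [0..<l0]"
    "delta_word (gamma_pow k (0, c1)) = map s_beta [l0..<l2]"
    "delta_word (gamma_pow k (0, c2)) = map s_beta [l2..<l3+1]"
    "delta_word (gamma_pow k (0, c3)) = map s_beta [l3+1..<l4]"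
    using assms by (simp_all add: lucas_segments_def l0_l1_l2_l3_l4_def)
  have "0 \<le> l0" "l0 \<le> l2" "l2 \<le> l3+1" "l3+1 \<le> l4" "0 \<le> l2"
    using rec \<open>0 < l2\<close> by linarith+
  then have c01: "delta_word (gamma_pow k (0, c0)) @ delta_word (gamma_pow k (0, c1))
      = map s_beta [0..<l2]"
    and c23: "delta_word (gamma_pow k (0, c2)) @ delta_word (gamma_pow k (0, c3))
      = map s_beta [l2..<l4]"
    and c012: "delta_word (gamma_pow k (0, c0)) @ delta_word (gamma_pow k (0, c1))
      @ delta_word (gamma_pow k (0, c2)) = map s_beta [0..<l3+1]"
    unfolding D by (simp_all only: map_upt_append flip: append_assoc)
  have idx: "2 * Suc k = 2*k+2" by simp
  show ?thesis
    unfolding lucas_segments_def lucas_index_Suc unfolding idx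
  proof (intro conjI)
    show "delta_word (gamma_pow (Suc k) (0, c0)) = map s_beta [0..<lucas (2*k+2)]"
      using c01 by (simp only: delta_word_gamma_pow_Suc l0_l1_l2_l3_l4_def)
    show "delta_word (gamma_pow (Suc k) (0, c1)) = map s_beta [lucas (2*k+2)..<lucas (2*k+4)]"
      using c23 by (simp only: delta_word_gamma_pow_Suc l0_l1_l2_l3_l4_def)
    show "delta_word (gamma_pow (Suc k) (0, c2)) = map s_beta [lucas (2*k+4)..<lucas (2*k+5)+1]"
      by (rule lucas_segments_Suc_c2[OF c012[unfolded l0_l1_l2_l3_l4_def]])
    show "delta_word (gamma_pow (Suc k) (0, c3)) = map s_beta [lucas (2*k+5)+1..<lucas (2*k+6)]"
      by (rule lucas_segments_Suc_c3[OF D(3,4)[unfolded l0_l1_l2_l3_l4_def]])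
  qed
qed

section \<open>The fixed point\<close>

lemma gamma_pow_nonempty: "gamma_pow k a \<noteq> []"
proof (induction k arbitrary: a)
  case 0
  then show ?case by (simp add: gamma_pow_def)
next
  case (Suc k)
  obtain b bs where "gamma a = b # bs" by (cases a rule: gamma.cases) auto
  then show ?case using Suc[of b] by (simp add: gamma_pow_Suc)
qed

lemma gamma_iter_eq_gamma_pow: "gamma_iter k = gamma_pow k (0, c0)"
  by (simp add: gamma_iter_def gamma_pow_def)

lemma gamma_iter_Suc: "gamma_iter (Suc k) = gamma_iter k @ gamma_pow k (0, c1)"
  by (simp add: gamma_iter_eq_gamma_pow gamma_pow_Suc)

lemma length_gamma_iter: "k < length (gamma_iter k)"
proof (induction k)
  case (Suc k)
  have "0 < length (gamma_pow k (0, c1))" using gamma_pow_nonempty by blast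
  then have "Suc k < length (gamma_iter k) + length (gamma_pow k (0, c1))" using Suc by linarith
  then show ?case by (simp add: gamma_iter_Suc)
qed (simp add: gamma_iter_def)

lemma gamma_iter_prefix: "k \<le> k' \<Longrightarrow> \<exists>w. gamma_iter k' = gamma_iter k @ w"
  by (induction k' rule: dec_induct) (auto simp: gamma_iter_Suc)

lemma nth_gamma_iter: "k \<le> k' \<Longrightarrow> gamma_iter k' ! k = gamma_iter k ! k"
  using gamma_iter_prefix[of k k'] length_gamma_iter[of k] by (auto simp: nth_append)

lemma is_gamma_limit_unique: "is_gamma_limit x \<Longrightarrow> is_gamma_limit y \<Longrightarrow> x = y"
proof
  fix n
  assume "is_gamma_limit x" "is_gamma_limit y"
  then obtain K L where K: "\<forall>k\<ge>K. gamma_iter k ! n = x n" and L: "\<forall>k\<ge>L. gamma_iter k ! n = y n"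
    unfolding is_gamma_limit_def by meson
  show "x n = y n" using K[rule_format, of "max K L"] L[rule_format, of "max K L"] by simp
qed

lemma x_gamma_eq: "x_gamma = (\<lambda>n. gamma_iter n ! n)"
proof -
  have lim: "is_gamma_limit (\<lambda>n. gamma_iter n ! n)"
    unfolding is_gamma_limit_def
  proof
    fix n
    show "\<exists>K. \<forall>k\<ge>K. n < length (gamma_iter k) \<and> gamma_iter k ! n = gamma_iter n ! n"
      using length_gamma_iter nth_gamma_iter le_less_trans by blast
  qed
  show ?thesis
    unfolding x_gamma_def
    by (rule the_equality[where P = is_gamma_limit, OF lim is_gamma_limit_unique[OF _ lim]])
qed

lemma map_x_gamma: "map x_gamma [0..<n] = take n (gamma_iter n)"
proof (rule nth_equalityI)
  show "length (map x_gamma [0..<n]) = length (take n (gamma_iter n))"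
    using length_gamma_iter[of n] by simp
next
  fix i
  assume "i < length (map x_gamma [0..<n])"
  then show "map x_gamma [0..<n] ! i = take n (gamma_iter n) ! i"
    using nth_gamma_iter[of i n] by (simp add: x_gamma_eq)
qed

lemma delta_word_gamma_iter: "delta_word (gamma_iter k) = map s_beta [0..<lucas (2*k)]"
proof -
  have "lucas_segments k" by (induction k) (simp_all add: lucas_segments_0 lucas_segments_Suc)
  then show ?thesis by (simp add: lucas_segments_def gamma_iter_eq_gamma_pow)
qed

theorem theorem5:
  shows "\<forall>n. concat (map (\<lambda>i. delta (x_gamma i)) [0..<n])
             = map s_beta [0..<length (concat (map (\<lambda>i. delta (x_gamma i)) [0..<n]))]"
proof
  fix n
  have prefix: "concat (map (\<lambda>i. delta (x_gamma i)) [0..<n]) = delta_word (take n (gamma_iter n))"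
    by (simp add: delta_word_def o_def flip: map_x_gamma)
  have "map s_beta [0..<lucas (2*n)]
      = delta_word (take n (gamma_iter n)) @ delta_word (drop n (gamma_iter n))"
    unfolding delta_word_gamma_iter[symmetric] delta_word_append[symmetric] by simp
  from map_upt_eq_append_prefix[OF this] show "concat (map (\<lambda>i. delta (x_gamma i)) [0..<n])
      = map s_beta [0..<length (concat (map (\<lambda>i. delta (x_gamma i)) [0..<n]))]"
    unfolding prefix .
qed

end
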